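(* For every $r\in(0,1/2)$ there is an integer $N\ge2$ with the following property. Let $\langle p_i/q_i\rangle_{i=1}^\infty$ belong to $\mathcal{QG}_N$, with expansions $p_i/q_i=[\langle b_{i,j}:\varepsilon_{i,j}\rangle_{j=1}^{m_i}]$, and define $k_1=1$ and $k_n=\prod_{i=1}^{n-1}q_{i,m_i}$ for $n\ge2$. Then for every $i\ge1$ and every $z\in\mathbb{C}$ with \[\left|z-\Big(\frac{p_i}{q_i}-i\,\frac{k_i}{q_i}\,\frac{\log 2}{2\pi}\Big)\right|\le\frac{\log2}{2\pi}\,\frac{k_i}{q_i}\] (where $i$ inside the parentheses denotes $\sqrt{-1}$), we have: (a) for every integer $n_i$ with $0\le n_i\le m_i-2$, $|G^{\circ n_i}(z)|\le r$, and $\arg G^{\circ n_i}(z)\in[-\pi/4,\pi/4]$ if $\operatorname{Re}G^{\circ n_i}(z)>0$, $\arg G^{\circ n_i}(z)\in[3\pi/4,5\pi/4]$ if $\operatorname{Re}G^{\circ n_i}(z)<0$; (b) $|G^{\circ(m_i-1)}(z)|\le r$.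
   Context: For $x\in\mathbb{R}$, $[x]$ is the closest integer to $x$ with the convention $x\in([x]-1/2,[x]+1/2]$ for $x>0$, $x\in[[x]-1/2,[x]+1/2)$ for $x<0$, $[0]=0$. $G(z)=-1/z-[\operatorname{Re}(-1/z)]$ for $z\ne0$. For integers $b_j\ge2$ and signs $\varepsilon_j$, $[\langle b_j:\varepsilon_j\rangle_{j=1}^m]=\cfrac{\varepsilon_1}{b_1+\cfrac{\varepsilon_2}{\ddots+\cfrac{\varepsilon_m}{b_m}}}$. For a nonzero rational $x\in[-1/2,1/2]$: set $x_1=x$, $x_{k+1}=-1/x_k-[-1/x_k]$ until $x_{m+1}=0$; $b_k=|[-1/x_k]|$, $\varepsilon_1=\operatorname{sign}(x_1)$, $\varepsilon_k=-\operatorname{sign}(x_{k-1})\operatorname{sign}(x_k)$ ($k\ge2$); then $x=[\langle b_k:\varepsilon_k\rangle_{k=1}^m]$ (its modified continued fraction expansion). For a sequence of nonzero rationals $p_i/q_i\in(-1/2,1/2]$ (lowest terms, $q_i>0$), let $p_i/q_i=[\langle b_{i,j}:\varepsilon_{i,j}\rangle_{j=1}^{m_i}]$ be this expansion and $q_{i,l}>0$ the denominator in lowest terms of $[\langle b_{i,j}:\varepsilon_{i,j}\rangle_{j=1}^l]$ (so $q_{i,m_i}=q_i$). For $N\ge2$, $\mathcal{QG}_N$ is the set of such sequences satisfying $b_{1,1}\ge N$, $b_{i+1,1}\ge q_{i,m_i}^2$ for all $i\ge1$, and $b_{i,j+1}\ge b_{i,j}^2$ for all $i\ge1$, $1\le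 j\le m_i-1$. *)

theory Defs
  imports "HOL-Analysis.Analysis"
begin

text \<open>Nearest integer [x]: for x > 0, x in ([x]-1/2, [x]+1/2];
  for x < 0, x in [[x]-1/2, [x]+1/2); [0] = 0.\<close>
definition nint :: "'a::floor_ceiling \<Rightarrow> int" where
  "nint x = (if x > 0 then \<lceil>x - 1/2\<rceil> else if x < 0 then \<lfloor>x + 1/2\<rfloor> else 0)"

text \<open>The complex map G(z) = -1/z - [Re(-1/z)] (for z = 0 the formula gives 0).\<close>
definition G :: "complex \<Rightarrow> complex" where
  "G z = -1/z - of_int (nint (Re (-1/z)))"

definition Tq :: "rat \<Rightarrow> rat" where
  "Tq x = -1/x - of_int (nint (-1/x))"

definition mcf_x :: "rat \<Rightarrow> nat \<Rightarrow> rat" where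
  "mcf_x x k = (Tq ^^ (k - 1)) x"

definition mcf_len :: "rat \<Rightarrow> nat" where
  "mcf_len x = (LEAST m. m \<ge> 1 \<and> mcf_x x (m + 1) = 0)"

definition mcf_b :: "rat \<Rightarrow> nat \<Rightarrow> int" where
  "mcf_b x k = \<bar>nint (-1 / mcf_x x k)\<bar>"

definition sgnq :: "rat \<Rightarrow> int" where
  "sgnq y = (if y > 0 then 1 else if y < 0 then -1 else 0)"

definition mcf_eps :: "rat \<Rightarrow> nat \<Rightarrow> int" where
  "mcf_eps x k = (if k \<le> 1 then sgnq (mcf_x x 1)
                  else - sgnq (mcf_x x (k - 1)) * sgnq (mcf_x x k))"

text \<open>Value of the finite continued fraction [<b_j : eps_j>] given as a list of pairs (b_j, eps_j).\<close>
fun cf_val :: "(int \<times> int) list \<Rightarrow> rat" where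
  "cf_val [] = 0"
| "cf_val ((b, e) # rest) = of_int e / (of_int b + cf_val rest)"

definition mcf_conv :: "rat \<Rightarrow> nat \<Rightarrow> rat" where
  "mcf_conv x l = cf_val (map (\<lambda>j. (mcf_b x j, mcf_eps x j)) [1..<l + 1])"

definition mcf_den :: "rat \<Rightarrow> nat \<Rightarrow> int" where
  "mcf_den x l = snd (quotient_of (mcf_conv x l))"

text \<open>The class QG_N for sequences indexed by i >= 1 (the value at index 0 is irrelevant).\<close>
definition QG :: "nat \<Rightarrow> (nat \<Rightarrow> rat) \<Rightarrow> bool" where
  "QG N x \<longleftrightarrow>
     (\<forall>i\<ge>1. x i \<noteq> 0 \<and> -1/2 < x i \<and> x i \<le> 1/2) \<and>
     mcf_b (x 1) 1 \<ge> int N \<and>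
     (\<forall>i\<ge>1. mcf_b (x (i + 1)) 1 \<ge> (mcf_den (x i) (mcf_len (x i)))\<^sup>2) \<and>
     (\<forall>i\<ge>1. \<forall>j. 1 \<le> j \<and> j \<le> mcf_len (x i) - 1 \<longrightarrow>
        mcf_b (x i) (j + 1) \<ge> (mcf_b (x i) j)\<^sup>2)"

definition has_arg_in :: "complex \<Rightarrow> real \<Rightarrow> real \<Rightarrow> bool" where
  "has_arg_in w a b \<longleftrightarrow> (\<exists>t. a \<le> t \<and> t \<le> b \<and> w = complex_of_real (cmod w) * cis t)"

end

theory Submission
  imports Defs
begin

text \<open>Call \<open>D(a, h)\<close>, the closed disc of diameter \<open>h\<close> below the real axis and tangent to it at \<open>a\<close>,
  a horodisc. Inversion \<open>z \<mapsto> -1/z\<close> maps \<open>D(a, h)\<close> onto \<open>D(-1/a, h/a\<^sup>2)\<close> and real translations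
  move horodiscs, so as long as the discs stay small, \<open>G\<^sup>n z \<in> D(x\<^sub>n\<^sub>+\<^sub>1, h/(x\<^sub>1\<cdots>x\<^sub>n)\<^sup>2)\<close>, where the
  \<open>x\<^sub>j\<close> are the remainders of the modified continued fraction of \<open>p\<^sub>i/q\<^sub>i\<close> and \<open>h = 2ck\<^sub>i/q\<^sub>i\<close>,
  \<open>c = log 2/2\<pi>\<close>.

  The denominator of \<open>x\<^sub>n\<^sub>+\<^sub>1\<close> is \<open>q\<^sub>i|x\<^sub>1\<cdots>x\<^sub>n|\<close>, and \<open>1/|x\<^sub>j| \<le> b\<^sub>j + 1/2\<close> together with the squaring
  growth \<open>b\<^sub>j\<^sub>+\<^sub>1 \<ge> b\<^sub>j\<^sup>2\<close> gives \<open>b\<^sub>1 \<le> 2b\<^sub>n\<^sub>+\<^sub>1|x\<^sub>1\<cdots>x\<^sub>n|\<close>. Since also \<open>k\<^sub>iN \<le> b\<^sub>i\<^sub>,\<^sub>1\<close>, the \<open>n\<close>-th disc lies within \<open>3/N \<le> r\<close>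
  of the origin, and before the last step its diameter is at most half of \<open>|x\<^sub>n\<^sub>+\<^sub>1|\<close>, which
  places \<open>G\<^sup>n z\<close> in the sectors \<open>|Im w| \<le> |Re w|\<close>.\<close>

section \<open>Nearest integers and denominators\<close>

lemma nint_dist_le:
  fixes t :: "'a::floor_ceiling"
  shows "\<bar>t - of_int (nint t)\<bar> \<le> 1/2"
  using ceiling_correct[of "t - 1/2"] floor_correct[of "t + 1/2"]
  unfolding nint_def abs_le_iff by (simp split: if_split) linarith

lemma nint_eqI:
  fixes t :: "'a::floor_ceiling"
  assumes "\<bar>t - of_int M\<bar> < 1/2"
  shows "nint t = M"
proof -
  have "\<lceil>t - 1/2\<rceil> = M" "\<lfloor>t + 1/2\<rfloor> = M"
    using assms unfolding abs_less_iff by (intro ceiling_unique floor_unique; linarith)+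
  moreover have "M = 0" if "t = 0"
  proof -
    have "\<bar>of_int M\<bar> < (1::'a)" using assms that by simp
    then show ?thesis by (simp only: of_int_abs[symmetric] of_int_less_1_iff)
  qed
  ultimately show ?thesis by (auto simp: nint_def)
qed

lemma abs_fst_quotient_of_less:
  assumes "\<bar>y\<bar> < 1"
  shows "\<bar>fst (quotient_of y)\<bar> < snd (quotient_of y)"
proof -
  obtain a c where ac: "quotient_of y = (a, c)" by force
  have "c > 0" using quotient_of_denom_pos[OF ac] .
  then have "of_int \<bar>a\<bar> < (of_int c :: rat)"
    using assms quotient_of_div[OF ac] by (simp add: abs_divide divide_less_eq)
  then show ?thesis using ac by simp
qed

lemma inverse_abs_le_snd_quotient_of:
  assumes "y \<noteq> 0"
  shows "1 / \<bar>y\<bar> \<le> of_int (snd (quotient_of y))"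
proof -
  obtain a c where ac: "quotient_of y = (a, c)" by force
  have "c > 0" "a \<noteq> 0" using quotient_of_denom_pos[OF ac] assms quotient_of_div[OF ac] by auto
  then have "of_int c / of_int \<bar>a\<bar> \<le> (of_int c :: rat)"
    by (simp add: divide_le_eq)
  then show ?thesis using ac quotient_of_div[OF ac] \<open>c > 0\<close> by (simp add: abs_divide)
qed

lemma one_le_snd_quotient_of_mult_abs:
  assumes "y \<noteq> 0"
  shows "1 \<le> of_int (snd (quotient_of y)) * \<bar>y\<bar>"
  using inverse_abs_le_snd_quotient_of[OF assms] assms by (simp add: divide_le_eq)

lemma snd_quotient_of_diff_of_int: "snd (quotient_of (y - of_int n)) = snd (quotient_of y)"
proof -
  obtain a c where ac: "quotient_of y = (a, c)" by force
  have "gcd c ((- n) * c + a) = gcd c a" by (rule gcd_add_mult)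
  then have "coprime (a - n * c) c"
    using quotient_of_coprime[OF ac] by (simp add: coprime_iff_gcd_eq_1 gcd.commute)
  then show ?thesis
    using ac quotient_of_denom_pos[OF ac] by (simp add: rat_minus_code)
qed

lemma snd_quotient_of_Tq:
  assumes "y \<noteq> 0"
  shows "snd (quotient_of (Tq y)) = \<bar>fst (quotient_of y)\<bar>"
proof -
  obtain a c where ac: "quotient_of y = (a, c)" by force
  have "a \<noteq> 0" using assms ac quotient_of_div[OF ac] by auto
  have "-1 / y = - inverse y" by (simp add: divide_inverse)
  then show ?thesis
    using ac \<open>a \<noteq> 0\<close> by (simp add: Tq_def snd_quotient_of_diff_of_int rat_uminus_code rat_inverse_code)
qed

lemma of_int_snd_quotient_of_Tq:
  assumes "y \<noteq> 0"
  shows "of_int (snd (quotient_of (Tq y))) = \<bar>y\<bar> * of_int (snd (quotient_of y))"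
proof -
  obtain a c where ac: "quotient_of y = (a, c)" by force
  show ?thesis using snd_quotient_of_Tq[OF assms] ac quotient_of_denom_pos[OF ac] quotient_of_div[OF ac]
    by (simp add: abs_divide)
qed

section \<open>The modified continued fraction expansion\<close>

lemma Tq_0 [simp]: "Tq 0 = 0"
  by (simp add: Tq_def nint_def)

lemma Tq_abs_le: "\<bar>Tq y\<bar> \<le> 1/2"
  unfolding Tq_def using nint_dist_le[of "-1/y"] by simp

lemma mcf_x_0 [simp]: "mcf_x x 0 = x"
  and mcf_x_1 [simp]: "mcf_x x 1 = x" "mcf_x x (Suc 0) = x"
  by (simp_all add: mcf_x_def)

lemma mcf_x_Suc: "0 < j \<Longrightarrow> mcf_x x (Suc j) = Tq (mcf_x x j)"
  by (cases j) (auto simp: mcf_x_def)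

lemma mcf_x_abs_le:
  assumes "\<bar>x\<bar> \<le> 1/2"
  shows "\<bar>mcf_x x j\<bar> \<le> 1/2"
proof (cases "j \<le> 1")
  case True
  then show ?thesis using assms by (cases j) auto
next
  case False
  then obtain i where "j = Suc i" "0 < i" by (cases j) auto
  then show ?thesis using Tq_abs_le[of "mcf_x x i"] by (simp add: mcf_x_Suc)
qed

text \<open>The denominators of the \<open>x\<^sub>j\<close> strictly decrease as long as \<open>x\<^sub>j \<noteq> 0\<close>, so the expansion
  terminates.\<close>
lemma mcf_x_terminates:
  assumes "\<bar>x\<bar> \<le> 1/2"
  shows "\<exists>m\<ge>1. mcf_x x (m + 1) = 0"
proof (rule ccontr)
  assume no_zero: "\<not> ?thesis"
  have nonzero: "mcf_x x j \<noteq> 0" if "0 < j" for j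
  proof
    assume "mcf_x x j = 0"
    then have "mcf_x x (j + 1) = 0" using that by (simp add: mcf_x_Suc)
    then show False using no_zero that by auto
  qed
  define d where "d j = snd (quotient_of (mcf_x x j))" for j
  have decreasing: "d (Suc j) < d j" if "0 < j" for j
    using snd_quotient_of_Tq[OF nonzero[OF that]] abs_fst_quotient_of_less[of "mcf_x x j"]
      mcf_x_abs_le[OF assms, of j] that by (simp add: d_def mcf_x_Suc)
  have "d (Suc j) + int j \<le> d 1" for j
  proof (induction j)
    case (Suc j)
    then show ?case using decreasing[of "Suc j"] by simp
  qed simp
  from this[of "nat (d 1)"] show False
    using quotient_of_denom_pos'[of "mcf_x x (Suc (nat (d 1)))"] quotient_of_denom_pos'[of x]
    by (simp add: d_def)
qed

lemma
  assumes "\<bar>x\<bar> \<le> 1/2"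
  shows mcf_len_ge_1: "1 \<le> mcf_len x"
    and mcf_x_Suc_mcf_len: "mcf_x x (Suc (mcf_len x)) = 0"
  using LeastI_ex[OF mcf_x_terminates[OF assms, simplified Bex_def]] by (simp_all add: mcf_len_def)

lemma mcf_x_nonzero:
  assumes "x \<noteq> 0" and "j \<le> mcf_len x"
  shows "mcf_x x j \<noteq> 0"
proof (cases "j \<le> 1")
  case True
  then show ?thesis using assms(1) by (cases j) auto
next
  case False
  then obtain i where "j = i + 1" "1 \<le> i" by (cases j) auto
  moreover have "i < mcf_len x" using assms(2) \<open>j = i + 1\<close> by simp
  ultimately show ?thesis using not_less_Least[of i] by (auto simp: mcf_len_def)
qed

lemma mcf_b_dist_le:
  assumes "0 < j"
  shows "\<bar>1 / \<bar>mcf_x x j\<bar> - of_int (mcf_b x j)\<bar> \<le> \<bar>mcf_x x (Suc j)\<bar>"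
proof -
  have "\<bar>\<bar>-1 / mcf_x x j\<bar> - \<bar>of_int (nint (-1 / mcf_x x j))\<bar>\<bar> \<le> \<bar>Tq (mcf_x x j)\<bar>"
    unfolding Tq_def by (rule abs_triangle_ineq3)
  then show ?thesis using assms by (simp add: mcf_b_def mcf_x_Suc abs_divide)
qed

lemma mcf_b_add_eps_mult:
  assumes "0 < n" and "mcf_x x n \<noteq> 0" and "\<bar>mcf_x x n\<bar> \<le> 1/2"
  shows "of_int (mcf_b x n) + of_int (mcf_eps x (Suc n)) * \<bar>mcf_x x (Suc n)\<bar> = 1 / \<bar>mcf_x x n\<bar>"
proof -
  define y where "y = mcf_x x n"
  define M where "M = nint (-1 / y)"
  have next_eq: "mcf_x x (Suc n) = -1 / y - of_int M"
    using assms(1) by (simp add: mcf_x_Suc Tq_def y_def M_def)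
  have "\<bar>-1 / y - of_int M\<bar> \<le> 1/2" unfolding M_def by (rule nint_dist_le)
  then have dist: "of_int M + 1 / y \<le> 1/2" "- (of_int M + 1 / y) \<le> 1/2"
    unfolding abs_le_iff by (simp_all add: abs_minus_commute)
  have "y \<noteq> 0" "\<bar>y\<bar> \<le> 1/2" using assms(2,3) by (simp_all add: y_def)
  then have two: "2 \<le> 1 / \<bar>y\<bar>" by (simp add: le_divide_eq)
  have "M < 0 \<and> 0 < y \<or> 0 < M \<and> y < 0"
  proof (cases "0 < y")
    case True
    then have "of_int M < (0::rat)" using two dist by simp
    then show ?thesis using True by simp
  next
    case False
    then have "0 < (of_int M::rat)" "y < 0" using two dist \<open>y \<noteq> 0\<close> by auto
    then show ?thesis by simp
  qed
  then show ?thesis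
    using assms(1) by (auto simp: mcf_b_def mcf_eps_def sgnq_def next_eq M_def y_def [symmetric])
qed

lemma cf_val_mcf_tail:
  assumes "x \<noteq> 0" and "\<bar>x\<bar> \<le> 1/2" and "0 < j" and "j \<le> mcf_len x + 1"
  shows "cf_val (map (\<lambda>j. (mcf_b x j, mcf_eps x j)) [j..<mcf_len x + 1])
    = of_int (mcf_eps x j) * \<bar>mcf_x x j\<bar>"
  using assms(4,3)
proof (induction j rule: inc_induct)
  case base
  then show ?case using mcf_x_Suc_mcf_len[OF assms(2)] by simp
next
  case (step j)
  have "[j..<mcf_len x + 1] = j # [Suc j..<mcf_len x + 1]"
    using step.hyps by (simp add: upt_conv_Cons)
  then show ?case
    using step mcf_b_add_eps_mult[of j x] mcf_x_nonzero[OF assms(1), of j] mcf_x_abs_le[OF assms(2), of j]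
    by simp
qed

lemma mcf_conv_mcf_len:
  assumes "x \<noteq> 0" and "\<bar>x\<bar> \<le> 1/2"
  shows "mcf_conv x (mcf_len x) = x"
  using cf_val_mcf_tail[OF assms, of 1] mcf_len_ge_1[OF assms(2)] assms(1)
  by (auto simp: mcf_conv_def mcf_eps_def sgnq_def)

lemma mcf_den_mcf_len:
  assumes "x \<noteq> 0" and "\<bar>x\<bar> \<le> 1/2"
  shows "mcf_den x (mcf_len x) = snd (quotient_of x)"
  by (simp add: mcf_den_def mcf_conv_mcf_len[OF assms])

lemma snd_quotient_of_mult_prod_mcf_x:
  assumes "x \<noteq> 0" and "n \<le> mcf_len x"
  shows "of_int (snd (quotient_of x)) * (\<Prod>j=1..n. \<bar>mcf_x x j\<bar>)
    = of_int (snd (quotient_of (mcf_x x (Suc n))))"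
  using assms(2)
proof (induction n)
  case (Suc n)
  then show ?case
    using of_int_snd_quotient_of_Tq[OF mcf_x_nonzero[OF assms(1) Suc.prems]]
    by (simp add: prod.cl_ivl_Suc mcf_x_Suc mult.assoc[symmetric] mult.commute)
qed simp

lemma mcf_b_mult_abs_le:
  assumes "\<bar>x\<bar> \<le> 1/2" and "0 < j"
  shows "of_int (mcf_b x j) * \<bar>mcf_x x j\<bar> \<le> 5/4"
proof -
  have "of_int (mcf_b x j) \<le> 1 / \<bar>mcf_x x j\<bar> + 1/2"
    using mcf_b_dist_le[OF assms(2), of x] mcf_x_abs_le[OF assms(1), of "Suc j"] by linarith
  then have "of_int (mcf_b x j) * \<bar>mcf_x x j\<bar> \<le> (1 / \<bar>mcf_x x j\<bar> + 1/2) * \<bar>mcf_x x j\<bar>"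
    by (rule mult_right_mono) simp
  also have "\<dots> \<le> 5/4"
    using mcf_x_abs_le[OF assms(1), of j] by (cases "mcf_x x j = 0") (simp_all add: algebra_simps)
  finally show ?thesis .
qed

lemma mcf_b_ge_2:
  assumes "\<bar>x\<bar> \<le> 1/2" and "0 < j" and "mcf_x x j \<noteq> 0"
  shows "2 \<le> mcf_b x j"
proof -
  have "2 \<le> 1 / \<bar>mcf_x x j\<bar>"
    using mcf_x_abs_le[OF assms(1), of j] assms(3) by (simp add: le_divide_eq)
  then have "(1::rat) < of_int (mcf_b x j)"
    using mcf_b_dist_le[OF assms(2), of x] mcf_x_abs_le[OF assms(1), of "Suc j"] by linarith
  then show ?thesis by simp
qed

lemma mcf_b_mult_abs_Suc_le:
  assumes "\<bar>x\<bar> \<le> 1/2" and "0 < j" and "mcf_x x j \<noteq> 0"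
    and "(mcf_b x j)\<^sup>2 \<le> mcf_b x (Suc j)"
  shows "of_int (mcf_b x j) * \<bar>mcf_x x (Suc j)\<bar> \<le> 1"
proof -
  have "2 * mcf_b x j \<le> (mcf_b x j)\<^sup>2"
    using mcf_b_ge_2[OF assms(1-3)] by (simp add: power2_eq_square)
  then have "(of_int (mcf_b x j + 1) :: rat) \<le> of_int (mcf_b x (Suc j))"
    using assms(4) mcf_b_ge_2[OF assms(1-3)] by (subst of_int_le_iff) linarith
  then have "of_int (mcf_b x j) + 1/2 \<le> (of_int (mcf_b x (Suc j)) :: rat)" by simp
  also have "\<dots> \<le> 1 / \<bar>mcf_x x (Suc j)\<bar> + 1/2"
    using mcf_b_dist_le[of "Suc j" x] mcf_x_abs_le[OF assms(1), of "Suc (Suc j)"] by linarith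
  finally have "of_int (mcf_b x j) \<le> 1 / \<bar>mcf_x x (Suc j)\<bar>" by simp
  then show ?thesis
    by (cases "mcf_x x (Suc j) = 0") (simp_all add: le_divide_eq)
qed

lemma prod_add_half_le_of_squaring:
  fixes B :: "nat \<Rightarrow> 'a::linordered_field"
  assumes "2 \<le> B 1" and "\<And>j. 1 \<le> j \<Longrightarrow> j \<le> n \<Longrightarrow> (B j)\<^sup>2 \<le> B (Suc j)"
  shows "B 1 * (\<Prod>j=1..n. B j + 1/2) \<le> 2 * B (Suc n) - 2 \<and> B 1 \<le> B (Suc n)"
  using assms(2)
proof (induction n)
  case 0
  then show ?case using assms(1) by simp
next
  case (Suc n)
  then have IH: "B 1 * (\<Prod>j=1..n. B j + 1/2) \<le> 2 * B (Suc n) - 2" "B 1 \<le> B (Suc n)"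
    by simp_all
  have square: "(B (Suc n))\<^sup>2 \<le> B (Suc (Suc n))" using Suc.prems by simp
  have "B 1 * (\<Prod>j=1..Suc n. B j + 1/2) = B 1 * (\<Prod>j=1..n. B j + 1/2) * (B (Suc n) + 1/2)"
    by (simp add: prod.cl_ivl_Suc mult.assoc)
  also have "\<dots> \<le> (2 * B (Suc n) - 2) * (B (Suc n) + 1/2)"
    using IH assms(1) by (intro mult_right_mono) auto
  also have "\<dots> = 2 * (B (Suc n))\<^sup>2 - B (Suc n) - 1"
    by (simp add: power2_eq_square algebra_simps)
  also have "\<dots> \<le> 2 * B (Suc (Suc n)) - 2"
    using square IH(2) assms(1) by simp
  finally have "B 1 * (\<Prod>j=1..Suc n. B j + 1/2) \<le> 2 * B (Suc (Suc n)) - 2" .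
  moreover have "B (Suc n) * 1 \<le> B (Suc n) * B (Suc n)"
    using IH(2) assms(1) by (intro mult_left_mono) auto
  ultimately show ?case
    using square IH(2) by (simp add: power2_eq_square)
qed

definition mcf_b_squaring :: "rat \<Rightarrow> bool" where
  "mcf_b_squaring x \<longleftrightarrow> (\<forall>j. 0 < j \<and> j < mcf_len x \<longrightarrow> (mcf_b x j)\<^sup>2 \<le> mcf_b x (Suc j))"

lemma mcf_b_1_le_prod:
  assumes "x \<noteq> 0" and "\<bar>x\<bar> \<le> 1/2"
    and squaring: "mcf_b_squaring x"
    and "n < mcf_len x"
  shows "of_int (mcf_b x 1) \<le> 2 * of_int (mcf_b x (Suc n)) * (\<Prod>j=1..n. \<bar>mcf_x x j\<bar>)"
    and "mcf_b x 1 \<le> mcf_b x (Suc n)"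
proof -
  define B where "B j = (of_int (mcf_b x j) :: rat)" for j
  have "B 1 * (\<Prod>j=1..n. B j + 1/2) \<le> 2 * B (Suc n) - 2 \<and> B 1 \<le> B (Suc n)"
  proof (rule prod_add_half_le_of_squaring)
    show "2 \<le> B 1"
      using mcf_b_ge_2[OF assms(2), of 1] assms(1) by (simp add: B_def)
    show "(B j)\<^sup>2 \<le> B (Suc j)" if "1 \<le> j" "j \<le> n" for j
      using squaring that assms(4) unfolding B_def mcf_b_squaring_def by (simp flip: of_int_power)
  qed
  then have growth: "B 1 * (\<Prod>j=1..n. B j + 1/2) \<le> 2 * B (Suc n)" "B 1 \<le> B (Suc n)" by simp_all
  then show "mcf_b x 1 \<le> mcf_b x (Suc n)" by (simp add: B_def)
  have "1 \<le> (B j + 1/2) * \<bar>mcf_x x j\<bar>" if "j \<in> {1..n}" for j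
  proof -
    have "mcf_x x j \<noteq> 0" using that assms(1,4) by (intro mcf_x_nonzero) auto
    moreover have "1 / \<bar>mcf_x x j\<bar> \<le> B j + 1/2"
      using mcf_b_dist_le[of j x] mcf_x_abs_le[OF assms(2), of "Suc j"] that by (simp add: B_def)
    ultimately show ?thesis by (simp add: divide_le_eq mult.commute)
  qed
  then have "1 \<le> (\<Prod>j=1..n. (B j + 1/2) * \<bar>mcf_x x j\<bar>)" by (rule prod_ge_1)
  then have "B 1 \<le> B 1 * (\<Prod>j=1..n. (B j + 1/2) * \<bar>mcf_x x j\<bar>)"
    using mcf_b_ge_2[OF assms(2), of 1] assms(1) by (simp add: B_def)
  also have "\<dots> = B 1 * (\<Prod>j=1..n. B j + 1/2) * (\<Prod>j=1..n. \<bar>mcf_x x j\<bar>)"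
    by (simp add: prod.distrib mult.assoc)
  also have "\<dots> \<le> 2 * B (Suc n) * (\<Prod>j=1..n. \<bar>mcf_x x j\<bar>)"
    using growth(1) by (intro mult_right_mono prod_nonneg) auto
  finally show "of_int (mcf_b x 1) \<le> 2 * of_int (mcf_b x (Suc n)) * (\<Prod>j=1..n. \<bar>mcf_x x j\<bar>)"
    by (simp add: B_def)
qed

lemma mcf_b_1_le_mult_den_prod_sq:
  assumes "x \<noteq> 0" and "\<bar>x\<bar> \<le> 1/2"
    and squaring: "mcf_b_squaring x"
    and "n < mcf_len x"
  shows "of_int (mcf_b x 1) \<le> 5/2 * (of_int (snd (quotient_of x)) * (\<Prod>j=1..n. mcf_x x j)\<^sup>2)"
    and "Suc n < mcf_len x \<Longrightarrow> of_int (mcf_b x 1)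
      \<le> 2 * \<bar>mcf_x x (Suc n)\<bar> * (of_int (snd (quotient_of x)) * (\<Prod>j=1..n. mcf_x x j)\<^sup>2)"
proof -
  define P where "P = (\<Prod>j=1..n. \<bar>mcf_x x j\<bar>)"
  define D where "D k = (of_int (snd (quotient_of (mcf_x x k))) :: rat)" for k
  define b where "b = (of_int (mcf_b x (Suc n)) :: rat)"
  have "0 \<le> P" "0 \<le> b" "0 \<le> D k" for k
    by (simp_all add: P_def prod_nonneg b_def mcf_b_def D_def order_less_imp_le[OF quotient_of_denom_pos'])
  have "(\<Prod>j=1..n. mcf_x x j)\<^sup>2 = P\<^sup>2"
    unfolding P_def abs_prod[symmetric] by simp
  then have den: "of_int (snd (quotient_of x)) * (\<Prod>j=1..n. mcf_x x j)\<^sup>2 = D (Suc n) * P"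
    using snd_quotient_of_mult_prod_mcf_x[OF assms(1), of n] assms(4)
    by (simp add: D_def P_def power2_eq_square mult.assoc[symmetric])
  have b1: "of_int (mcf_b x 1) \<le> 2 * b * P"
    using mcf_b_1_le_prod[OF assms] by (simp add: b_def P_def)
  have scale: "of_int (mcf_b x 1) \<le> 2 * b * P * t" if "1 \<le> t" for t
    using b1 mult_left_mono[OF that, of "2 * b * P"] \<open>0 \<le> P\<close> \<open>0 \<le> b\<close> by simp
  have "mcf_x x (Suc n) \<noteq> 0" using assms(1,4) by (simp add: mcf_x_nonzero)
  then have "of_int (mcf_b x 1) \<le> 2 * b * P * (D (Suc n) * \<bar>mcf_x x (Suc n)\<bar>)"
    unfolding D_def by (intro scale one_le_snd_quotient_of_mult_abs)
  also have "\<dots> = 2 * (b * \<bar>mcf_x x (Suc n)\<bar>) * (D (Suc n) * P)" by (simp add: ac_simps)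
  also have "\<dots> \<le> 2 * (5/4) * (D (Suc n) * P)"
    using mcf_b_mult_abs_le[OF assms(2), of "Suc n"] \<open>0 \<le> P\<close> \<open>0 \<le> D (Suc n)\<close>
    by (intro mult_right_mono mult_left_mono) (simp_all add: b_def)
  finally show "of_int (mcf_b x 1) \<le> 5/2 * (of_int (snd (quotient_of x)) * (\<Prod>j=1..n. mcf_x x j)\<^sup>2)"
    unfolding den by simp
  assume "Suc n < mcf_len x"
  then have "mcf_x x (Suc (Suc n)) \<noteq> 0" using assms(1) by (simp add: mcf_x_nonzero)
  then have "1 \<le> D (Suc (Suc n)) * \<bar>mcf_x x (Suc (Suc n))\<bar>"
    unfolding D_def by (rule one_le_snd_quotient_of_mult_abs)
  then have "of_int (mcf_b x 1) \<le> 2 * b * P * (D (Suc (Suc n)) * \<bar>mcf_x x (Suc (Suc n))\<bar>)"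
    by (rule scale)
  also have "\<dots> = 2 * (b * \<bar>mcf_x x (Suc (Suc n))\<bar>) * \<bar>mcf_x x (Suc n)\<bar> * (D (Suc n) * P)"
    using of_int_snd_quotient_of_Tq[OF \<open>mcf_x x (Suc n) \<noteq> 0\<close>] by (simp add: D_def mcf_x_Suc ac_simps)
  also have "\<dots> \<le> 2 * 1 * \<bar>mcf_x x (Suc n)\<bar> * (D (Suc n) * P)"
    using mcf_b_mult_abs_Suc_le[OF assms(2) _ \<open>mcf_x x (Suc n) \<noteq> 0\<close>] squaring
      \<open>Suc n < mcf_len x\<close> \<open>0 \<le> P\<close> \<open>0 \<le> D (Suc n)\<close>
    by (intro mult_right_mono mult_left_mono) (simp_all add: b_def mcf_b_squaring_def)
  finally show "of_int (mcf_b x 1)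
      \<le> 2 * \<bar>mcf_x x (Suc n)\<bar> * (of_int (snd (quotient_of x)) * (\<Prod>j=1..n. mcf_x x j)\<^sup>2)"
    unfolding den by simp
qed

section \<open>Horodiscs\<close>

definition horodisk :: "real \<Rightarrow> real \<Rightarrow> complex set" where
  "horodisk a h = cball (complex_of_real a - \<i> * complex_of_real (h / 2)) (h / 2)"

lemma horodisk_nonneg: "z \<in> horodisk a h \<Longrightarrow> 0 \<le> h"
proof -
  assume "z \<in> horodisk a h"
  then have "0 \<le> h / 2" unfolding horodisk_def mem_cball using zero_le_dist order_trans by blast
  then show ?thesis by simp
qed

lemma mem_horodisk_iff:
  assumes "0 \<le> h"
  shows "z \<in> horodisk a h \<longleftrightarrow> (cmod (z - complex_of_real a))\<^sup>2 \<le> - h * Im z"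
proof -
  have "z \<in> horodisk a h \<longleftrightarrow> (cmod (z - (complex_of_real a - \<i> * complex_of_real (h / 2))))\<^sup>2 \<le> (h/2)\<^sup>2"
    using assms unfolding horodisk_def mem_cball dist_norm
    by (simp add: power2_le_iff_abs_le norm_minus_commute)
  also have "\<dots> \<longleftrightarrow> (Re z - a)\<^sup>2 + (Im z + h/2)\<^sup>2 \<le> (h/2)\<^sup>2"
    by (simp add: cmod_power2)
  also have "\<dots> \<longleftrightarrow> (cmod (z - complex_of_real a))\<^sup>2 \<le> - h * Im z"
  proof -
    have "(Re z - a)\<^sup>2 + (Im z + h/2)\<^sup>2 - (h/2)\<^sup>2 = (cmod (z - complex_of_real a))\<^sup>2 + h * Im z"
      unfolding cmod_power2 by (simp add: power2_eq_square algebra_simps)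
    then show ?thesis by linarith
  qed
  finally show ?thesis .
qed

lemma norm_diff_le_of_mem_horodisk:
  assumes "z \<in> horodisk a h"
  shows "cmod (z - complex_of_real a) \<le> h"
proof -
  define c where "c = complex_of_real a - \<i> * complex_of_real (h / 2)"
  have "cmod (z - c) \<le> h / 2"
    using assms by (simp add: horodisk_def c_def dist_norm norm_minus_commute)
  moreover have "cmod (c - complex_of_real a) \<le> h / 2"
    using horodisk_nonneg[OF assms] by (simp add: c_def norm_mult)
  ultimately show ?thesis using norm_diff_triangle_le by fastforce
qed

lemma norm_le_of_mem_horodisk:
  assumes "z \<in> horodisk a h"
  shows "cmod z \<le> \<bar>a\<bar> + h"
  using norm_diff_le_of_mem_horodisk[OF assms] norm_triangle_ineq2[of z "complex_of_real a"] by simp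

lemma horodisk_translate:
  "z \<in> horodisk a h \<Longrightarrow> z - complex_of_real t \<in> horodisk (a - t) h"
  by (simp add: horodisk_def dist_norm algebra_simps)

lemma horodisk_inverse:
  assumes "a \<noteq> 0" and "z \<in> horodisk a h"
  shows "-1 / z \<in> horodisk (-1 / a) (h / a\<^sup>2)"
proof -
  have "0 \<le> h" using horodisk_nonneg[OF assms(2)] .
  have disk: "(cmod (z - complex_of_real a))\<^sup>2 \<le> - h * Im z"
    using assms(2) \<open>0 \<le> h\<close> by (simp add: mem_horodisk_iff)
  have "z \<noteq> 0" using disk assms(1) by auto
  have "-1 / z - complex_of_real (-1 / a) = (z - complex_of_real a) / (complex_of_real a * z)"
    using \<open>z \<noteq> 0\<close> assms(1) by (simp add: field_simps)
  then have "(cmod (-1 / z - complex_of_real (-1 / a)))\<^sup>2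
      = (cmod (z - complex_of_real a))\<^sup>2 / (a\<^sup>2 * (cmod z)\<^sup>2)"
    by (simp add: norm_divide norm_mult power_divide power_mult_distrib)
  also have "\<dots> \<le> - h * Im z / (a\<^sup>2 * (cmod z)\<^sup>2)"
    using divide_right_mono[OF disk, of "a\<^sup>2 * (cmod z)\<^sup>2"] by simp
  also have "\<dots> = - (h / a\<^sup>2) * Im (-1 / z)"
    by (simp add: Im_divide cmod_power2)
  finally show ?thesis using \<open>0 \<le> h\<close> by (simp add: mem_horodisk_iff)
qed

text \<open>The smallness condition forces \<open>[Re(-1/z)] = -1/a - b\<close>, so on this disc \<open>G\<close> is the inversion
  \<open>z \<mapsto> -1/z\<close> followed by a fixed integer translation.\<close>
lemma G_mem_horodisk:
  assumes "a \<noteq> 0" and "z \<in> horodisk a h" and "-1 / a - b \<in> \<int>" and "\<bar>b\<bar> + h / a\<^sup>2 < 1/2"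
  shows "G z \<in> horodisk b (h / a\<^sup>2)"
proof -
  obtain M where M: "-1 / a - b = of_int M" using assms(3) by (auto elim: Ints_cases)
  have w: "-1 / z \<in> horodisk (-1 / a) (h / a\<^sup>2)" by (rule horodisk_inverse[OF assms(1,2)])
  have "\<bar>Re (-1 / z) - (-1 / a)\<bar> \<le> h / a\<^sup>2"
    using norm_diff_le_of_mem_horodisk[OF w] abs_Re_le_cmod[of "-1 / z - complex_of_real (-1 / a)"]
    by simp
  then have "\<bar>Re (-1 / z) - of_int M\<bar> < 1/2" using M assms(4) by linarith
  then have G: "G z = -1 / z - of_int M" by (simp add: G_def nint_eqI)
  show ?thesis
    using horodisk_translate[OF w, of "of_int M"] M unfolding G by (simp add: algebra_simps)
qed

lemma G_iterate_mem_horodisk: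
  fixes a h :: "nat \<Rightarrow> real"
  assumes "z \<in> horodisk (a 0) (h 0)"
    and "\<And>k. k < n \<Longrightarrow> a k \<noteq> 0"
    and "\<And>k. k < n \<Longrightarrow> -1 / a k - a (Suc k) \<in> \<int>"
    and "\<And>k. k < n \<Longrightarrow> h (Suc k) = h k / (a k)\<^sup>2"
    and "\<And>k. k < n \<Longrightarrow> \<bar>a (Suc k)\<bar> + h (Suc k) < 1/2"
  shows "(G ^^ n) z \<in> horodisk (a n) (h n)"
  using assms(2-)
proof (induction n)
  case 0
  then show ?case using assms(1) by simp
next
  case (Suc n)
  then have "(G ^^ n) z \<in> horodisk (a n) (h n)" by simp
  then show ?case
    using G_mem_horodisk[of "a n" "(G ^^ n) z" "h n" "a (Suc n)"] Suc.prems[of n] by simp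
qed

lemma has_arg_in_of_abs_Im_le:
  assumes "0 < Re w" and "\<bar>Im w\<bar> \<le> Re w"
  shows "has_arg_in w (-pi/4) (pi/4)"
proof -
  define t where "t = Im w / Re w"
  have "\<bar>t\<bar> \<le> 1" using assms by (simp add: t_def abs_divide divide_le_eq)
  then have "-pi/4 \<le> arctan t" "arctan t \<le> pi/4"
    using arctan_le_iff[of "-1" t] arctan_le_iff[of t 1] by (simp_all add: arctan_minus arctan_one abs_le_iff)
  moreover have norm: "cmod w = Re w * sqrt (1 + t\<^sup>2)"
  proof -
    have "(Re w)\<^sup>2 + (Im w)\<^sup>2 = (Re w)\<^sup>2 * (1 + t\<^sup>2)"
      using assms(1) by (simp add: t_def field_simps power2_eq_square)
    then show ?thesis using assms(1) by (simp add: cmod_def real_sqrt_mult)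
  qed
  have "w = complex_of_real (cmod w) * cis (arctan t)"
    using assms(1) add_pos_nonneg[of 1 "t\<^sup>2"]
    by (simp add: complex_eq_iff norm cos_arctan sin_arctan t_def)
  ultimately show ?thesis unfolding has_arg_in_def by blast
qed

lemma has_arg_in_of_abs_Im_le_neg:
  assumes "Re w < 0" and "\<bar>Im w\<bar> \<le> - Re w"
  shows "has_arg_in w (3*pi/4) (5*pi/4)"
proof -
  obtain t where t: "-pi/4 \<le> t" "t \<le> pi/4" "-w = complex_of_real (cmod w) * cis t"
    using has_arg_in_of_abs_Im_le[of "-w"] assms unfolding has_arg_in_def by auto
  have "w = complex_of_real (cmod w) * cis (t + pi)"
    using t(3) by (simp add: cis_def complex_eq_iff cos_add sin_add)
  then show ?thesis unfolding has_arg_in_def using t(1,2) by (intro exI[of _ "t + pi"]) simp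
qed

lemma has_arg_in_of_mem_horodisk:
  assumes "w \<in> horodisk a h" and "2 * h \<le> \<bar>a\<bar>"
  shows "0 < Re w \<Longrightarrow> has_arg_in w (-pi/4) (pi/4)"
    and "Re w < 0 \<Longrightarrow> has_arg_in w (3*pi/4) (5*pi/4)"
proof -
  have "\<bar>Re w - a\<bar> \<le> h" "\<bar>Im w\<bar> \<le> h"
    using norm_diff_le_of_mem_horodisk[OF assms(1)] abs_Re_le_cmod[of "w - complex_of_real a"]
      abs_Im_le_cmod[of "w - complex_of_real a"] by simp_all
  then have "\<bar>Im w\<bar> \<le> \<bar>Re w\<bar>" "0 < Re w \<longleftrightarrow> 0 < a"
    using assms(2) by (cases "0 \<le> a"; simp add: abs_le_iff; linarith)+
  then show "0 < Re w \<Longrightarrow> has_arg_in w (-pi/4) (pi/4)"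
    and "Re w < 0 \<Longrightarrow> has_arg_in w (3*pi/4) (5*pi/4)"
    by (intro has_arg_in_of_abs_Im_le has_arg_in_of_abs_Im_le_neg; auto)+
qed

section \<open>The orbit of a point near \<open>p\<^sub>i/q\<^sub>i\<close>\<close>

lemma mcf_horodisk_diameter_le:
  fixes h N :: real
  assumes "x \<noteq> 0" and "\<bar>x\<bar> \<le> 1/2"
    and squaring: "mcf_b_squaring x"
    and "2 \<le> N" and "N \<le> of_int (mcf_b x 1)"
    and "3 * N * h * of_int (snd (quotient_of x)) \<le> of_int (mcf_b x 1)"
    and "n < mcf_len x"
  defines "H \<equiv> h / (of_rat (\<Prod>j=1..n. mcf_x x j))\<^sup>2"
  shows "\<bar>of_rat (mcf_x x (Suc n))\<bar> + H \<le> 3 / N"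
    and "Suc n < mcf_len x \<Longrightarrow> 2 * H \<le> \<bar>of_rat (mcf_x x (Suc n))\<bar>"
proof -
  define X where "X = \<bar>real_of_rat (mcf_x x (Suc n))\<bar>"
  define S where "S = real_of_int (snd (quotient_of x)) * (of_rat (\<Prod>j=1..n. mcf_x x j))\<^sup>2"
  have "(\<Prod>j=1..n. mcf_x x j) \<noteq> 0"
    using assms(1,7) by (simp add: mcf_x_nonzero)
  then have "0 < S" by (simp add: S_def quotient_of_denom_pos')
  have "real_of_rat (\<Prod>j=1..n. mcf_x x j) \<noteq> 0"
    using \<open>(\<Prod>j=1..n. mcf_x x j) \<noteq> 0\<close> by simp
  then have "3 * N * h * of_int (snd (quotient_of x)) = 3 * N * H * S"
    by (simp add: H_def S_def)
  then have HS: "3 * N * H * S \<le> of_int (mcf_b x 1)" using assms(6) by linarith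
  note rat_bounds = mcf_b_1_le_mult_den_prod_sq[OF assms(1-3,7)]
  have "real_of_rat (of_int (mcf_b x 1))
      \<le> real_of_rat (5/2 * (of_int (snd (quotient_of x)) * (\<Prod>j=1..n. mcf_x x j)\<^sup>2))"
    using rat_bounds(1) by (simp only: of_rat_less_eq)
  then have "of_int (mcf_b x 1) \<le> 5/2 * S"
    by (simp add: S_def of_rat_mult of_rat_power of_rat_divide)
  then have "(3 * N * H) * S \<le> 5/2 * S" using HS by linarith
  then have "3 * N * H \<le> 5/2" using \<open>0 < S\<close> by (simp only: mult_le_cancel_right_pos)
  then have "H \<le> 5 / (6 * N)" using assms(4) by (simp add: field_simps)
  moreover have "N * X \<le> 5/4"
  proof -
    have "N \<le> of_int (mcf_b x (Suc n))"
      using mcf_b_1_le_prod(2)[OF assms(1-3,7)] assms(5) by linarith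
    then have "N * X \<le> of_int (mcf_b x (Suc n)) * X" by (simp add: X_def mult_right_mono)
    also have "\<dots> = of_rat (of_int (mcf_b x (Suc n)) * \<bar>mcf_x x (Suc n)\<bar>)"
      by (simp add: X_def of_rat_mult)
    also have "\<dots> \<le> of_rat (5/4)"
      using mcf_b_mult_abs_le[OF assms(2), of "Suc n"] by (simp only: of_rat_less_eq)
    also have "\<dots> = 5/4" by (simp add: of_rat_divide)
    finally show ?thesis .
  qed
  ultimately show "\<bar>of_rat (mcf_x x (Suc n))\<bar> + H \<le> 3 / N"
    using assms(4) by (simp add: X_def field_simps)
  assume "Suc n < mcf_len x"
  have "real_of_rat (of_int (mcf_b x 1)) \<le> real_of_rat
      (2 * \<bar>mcf_x x (Suc n)\<bar> * (of_int (snd (quotient_of x)) * (\<Prod>j=1..n. mcf_x x j)\<^sup>2))"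
    using rat_bounds(2) \<open>Suc n < mcf_len x\<close> by (simp only: of_rat_less_eq)
  then have "of_int (mcf_b x 1) \<le> 2 * X * S"
    by (simp add: S_def X_def of_rat_mult of_rat_power)
  then have "(3 * N * H) * S \<le> (2 * X) * S" using HS by linarith
  then have "3 * N * H \<le> 2 * X" using \<open>0 < S\<close> by (simp only: mult_le_cancel_right_pos)
  moreover have "2 * H \<le> N * H" if "0 \<le> H" using mult_right_mono[OF assms(4) that] .
  ultimately show "2 * H \<le> \<bar>of_rat (mcf_x x (Suc n))\<bar>"
    unfolding X_def by (cases "0 \<le> H") linarith+
qed

lemma mcf_G_iterate_mem_horodisk:
  fixes h N :: real
  assumes "x \<noteq> 0" and "\<bar>x\<bar> \<le> 1/2"
    and squaring: "mcf_b_squaring x"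
    and "2 \<le> N" and "N \<le> of_int (mcf_b x 1)"
    and "3 * N * h * of_int (snd (quotient_of x)) \<le> of_int (mcf_b x 1)"
    and "3 / N < 1/2"
    and "z \<in> horodisk (of_rat x) h" and "n < mcf_len x"
  shows "(G ^^ n) z \<in> horodisk (of_rat (mcf_x x (Suc n))) (h / (of_rat (\<Prod>j=1..n. mcf_x x j))\<^sup>2)"
proof (rule G_iterate_mem_horodisk)
  show "z \<in> horodisk (of_rat (mcf_x x (Suc 0))) (h / (of_rat (\<Prod>j=1..0. mcf_x x j))\<^sup>2)"
    using assms(8) by simp
  fix k assume "k < n"
  then have "Suc k < mcf_len x" using assms(9) by simp
  then show "real_of_rat (mcf_x x (Suc k)) \<noteq> 0"
    using assms(1) by (simp add: mcf_x_nonzero)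
  have "-1 / mcf_x x (Suc k) - mcf_x x (Suc (Suc k)) = of_int (nint (-1 / mcf_x x (Suc k)))"
    by (simp add: mcf_x_Suc Tq_def)
  then show "-1 / real_of_rat (mcf_x x (Suc k)) - real_of_rat (mcf_x x (Suc (Suc k))) \<in> \<int>"
    by (metis Ints_of_int of_rat_diff of_rat_divide of_rat_minus of_rat_1 of_rat_of_int_eq)
  show "h / (of_rat (\<Prod>j=1..Suc k. mcf_x x j))\<^sup>2
      = h / (of_rat (\<Prod>j=1..k. mcf_x x j))\<^sup>2 / (of_rat (mcf_x x (Suc k)))\<^sup>2"
    by (simp add: prod.cl_ivl_Suc of_rat_mult power_mult_distrib)
  show "\<bar>of_rat (mcf_x x (Suc (Suc k)))\<bar> + h / (of_rat (\<Prod>j=1..Suc k. mcf_x x j))\<^sup>2 < 1/2"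
    using mcf_horodisk_diameter_le(1)[OF assms(1-6) \<open>Suc k < mcf_len x\<close>] assms(7) by linarith
qed

lemma mcf_G_iterate_bounds:
  fixes h N r :: real
  assumes "x \<noteq> 0" and "\<bar>x\<bar> \<le> 1/2"
    and squaring: "mcf_b_squaring x"
    and "2 \<le> N" and "N \<le> of_int (mcf_b x 1)"
    and "3 * N * h * of_int (snd (quotient_of x)) \<le> of_int (mcf_b x 1)"
    and "3 / N \<le> r" and "r < 1/2"
    and "z \<in> horodisk (of_rat x) h"
  shows "(\<forall>n. n + 2 \<le> mcf_len x \<longrightarrow> cmod ((G ^^ n) z) \<le> r \<and>
      (Re ((G ^^ n) z) > 0 \<longrightarrow> has_arg_in ((G ^^ n) z) (-pi/4) (pi/4)) \<and>
      (Re ((G ^^ n) z) < 0 \<longrightarrow> has_arg_in ((G ^^ n) z) (3*pi/4) (5*pi/4))) \<and>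
    cmod ((G ^^ (mcf_len x - 1)) z) \<le> r"
proof -
  have "3 / N < 1/2" using assms(7,8) by linarith
  note horodisk = mcf_G_iterate_mem_horodisk[OF assms(1-6) this assms(9)]
  have norm: "cmod ((G ^^ n) z) \<le> r" if "n < mcf_len x" for n
    using norm_le_of_mem_horodisk[OF horodisk[OF that]] mcf_horodisk_diameter_le(1)[OF assms(1-6) that] assms(7)
    by linarith
  show ?thesis
  proof (intro conjI allI impI)
    fix n assume "n + 2 \<le> mcf_len x"
    then have "n < mcf_len x" "Suc n < mcf_len x" by simp_all
    note arg = has_arg_in_of_mem_horodisk[OF horodisk[OF \<open>n < mcf_len x\<close>]
        mcf_horodisk_diameter_le(2)[OF assms(1-6) \<open>n < mcf_len x\<close> \<open>Suc n < mcf_len x\<close>]]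
    show "cmod ((G ^^ n) z) \<le> r" using norm[OF \<open>n < mcf_len x\<close>] .
    show "0 < Re ((G ^^ n) z) \<Longrightarrow> has_arg_in ((G ^^ n) z) (-pi/4) (pi/4)" by (rule arg(1))
    show "Re ((G ^^ n) z) < 0 \<Longrightarrow> has_arg_in ((G ^^ n) z) (3*pi/4) (5*pi/4)" by (rule arg(2))
  next
    show "cmod ((G ^^ (mcf_len x - 1)) z) \<le> r"
      using norm mcf_len_ge_1[OF assms(2)] by simp
  qed
qed

lemma mcf_b_1_le_snd_quotient_of:
  assumes "x \<noteq> 0" and "\<bar>x\<bar> \<le> 1/2"
  shows "mcf_b x 1 \<le> snd (quotient_of x)"
proof -
  have "of_int (mcf_b x 1) \<le> 1 / \<bar>x\<bar> + 1/2"
    using mcf_b_dist_le[of 1 x] mcf_x_abs_le[OF assms(2), of 2] by (simp add: numeral_2_eq_2)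
  then have "of_int (mcf_b x 1) < (of_int (snd (quotient_of x) + 1) :: rat)"
    using inverse_abs_le_snd_quotient_of[OF assms(1)] by simp
  then show ?thesis by (simp only: of_int_less_iff)
qed

lemma prod_mult_le_of_square_le:
  fixes b q :: "nat \<Rightarrow> 'a::linordered_idom"
  assumes "N \<le> b 1"
    and "\<And>l. 1 \<le> l \<Longrightarrow> 0 \<le> b l \<and> b l \<le> q l"
    and "\<And>l. 1 \<le> l \<Longrightarrow> (q l)\<^sup>2 \<le> b (Suc l)"
    and "1 \<le> i"
  shows "(\<Prod>l\<in>{1..<i}. q l) * N \<le> b i"
  using assms(4)
proof (induction i rule: dec_induct)
  case base
  then show ?case using assms(1) by simp
next
  case (step i)
  have "(\<Prod>l\<in>{1..<Suc i}. q l) * N = (\<Prod>l\<in>{1..<i}. q l) * N * q i"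
    using step.hyps by (simp add: prod.atLeastLessThan_Suc ac_simps)
  also have "\<dots> \<le> b i * q i"
    using step.IH assms(2)[OF step.hyps(1)] by (intro mult_right_mono) auto
  also have "\<dots> \<le> (q i)\<^sup>2"
    using assms(2)[OF step.hyps(1)] by (simp add: power2_eq_square mult_right_mono)
  also have "\<dots> \<le> b (Suc i)" using assms(3)[OF step.hyps(1)] .
  finally show ?case .
qed

lemma QG_prod_den_mult_le:
  assumes "QG N x" and "1 \<le> i"
  shows "(\<Prod>l\<in>{1..<i}. real_of_int (snd (quotient_of (x l)))) * N \<le> of_int (mcf_b (x i) 1)"
proof (rule prod_mult_le_of_square_le[OF _ _ _ assms(2)])
  have x: "x l \<noteq> 0" "\<bar>x l\<bar> \<le> 1/2" if "1 \<le> l" for l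
    using assms(1) that by (auto simp: QG_def)
  show "real N \<le> of_int (mcf_b (x 1) 1)" using assms(1) by (simp add: QG_def)
  show "0 \<le> real_of_int (mcf_b (x l) 1) \<and> real_of_int (mcf_b (x l) 1) \<le> of_int (snd (quotient_of (x l)))"
    if "1 \<le> l" for l
    using mcf_b_1_le_snd_quotient_of[OF x[OF that]] by (simp add: mcf_b_def)
  show "(real_of_int (snd (quotient_of (x l))))\<^sup>2 \<le> of_int (mcf_b (x (Suc l)) 1)" if "1 \<le> l" for l
    using assms(1) that mcf_den_mcf_len[OF x[OF that]] by (auto simp: QG_def simp flip: of_int_power)
qed

lemma QG_G_iterate_bounds:
  fixes c r :: real
  assumes "QG N x" and "1 \<le> i" and "2 \<le> N" and "0 \<le> c" and "6 * c \<le> 1"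
    and "3 / N \<le> r" and "r < 1/2"
  defines "q \<equiv> real_of_int (snd (quotient_of (x i)))"
    and "k \<equiv> \<Prod>l\<in>{1..<i}. real_of_int (snd (quotient_of (x l)))"
  assumes "cmod (z - (complex_of_real (real_of_rat (x i)) - \<i> * complex_of_real (k / q * c))) \<le> c * (k / q)"
  shows "(\<forall>n. n + 2 \<le> mcf_len (x i) \<longrightarrow> cmod ((G ^^ n) z) \<le> r \<and>
      (Re ((G ^^ n) z) > 0 \<longrightarrow> has_arg_in ((G ^^ n) z) (-pi/4) (pi/4)) \<and>
      (Re ((G ^^ n) z) < 0 \<longrightarrow> has_arg_in ((G ^^ n) z) (3*pi/4) (5*pi/4))) \<and>
    cmod ((G ^^ (mcf_len (x i) - 1)) z) \<le> r"
proof (rule mcf_G_iterate_bounds)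
  show "x i \<noteq> 0" "\<bar>x i\<bar> \<le> 1/2" "mcf_b_squaring (x i)"
    using assms(1,2) by (auto simp: QG_def mcf_b_squaring_def)
  show "2 \<le> real N" "3 / real N \<le> r" "r < 1/2" using assms(3,6,7) by simp_all
  have "k * N \<le> of_int (mcf_b (x i) 1)"
    unfolding k_def by (rule QG_prod_den_mult_le[OF assms(1,2)])
  moreover have "1 \<le> k"
    unfolding k_def by (intro prod_ge_1) (simp add: quotient_of_denom_pos' int_one_le_iff_zero_less)
  ultimately show "real N \<le> of_int (mcf_b (x i) 1)"
    using mult_right_mono[of 1 k "real N"] by simp
  have "0 < q" by (simp add: q_def quotient_of_denom_pos')
  then have "3 * real N * (2 * (k / q * c)) * q = (6 * c) * (k * N)" by simp
  also have "\<dots> \<le> k * N"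
    using assms(4,5) \<open>1 \<le> k\<close> mult_right_mono[of "6 * c" 1 "k * N"] by simp
  finally show "3 * real N * (2 * (k / q * c)) * of_int (snd (quotient_of (x i))) \<le> of_int (mcf_b (x i) 1)"
    using \<open>k * N \<le> of_int (mcf_b (x i) 1)\<close> by (simp add: q_def)
  show "z \<in> horodisk (of_rat (x i)) (2 * (k / q * c))"
    using assms(10) by (simp add: horodisk_def dist_norm norm_minus_commute mult.commute)
qed

theorem proposition6p7:
  fixes r :: real
  assumes "0 < r" and "r < 1/2"
  shows "\<exists>N::nat. N \<ge> 2 \<and>
    (\<forall>x :: nat \<Rightarrow> rat. QG N x \<longrightarrow>
      (\<forall>i\<ge>1. \<forall>z :: complex.
        let q = real_of_int (snd (quotient_of (x i)));
            k = (\<Prod>l\<in>{1..<i}. real_of_int (snd (quotient_of (x l))));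
            m = mcf_len (x i)
        in cmod (z - (complex_of_real (real_of_rat (x i))
                      - \<i> * complex_of_real ((k / q) * (ln 2 / (2 * pi)))))
             \<le> (ln 2 / (2 * pi)) * (k / q) \<longrightarrow>
           (\<forall>n::nat. n + 2 \<le> m \<longrightarrow>
              cmod ((G ^^ n) z) \<le> r \<and>
              (Re ((G ^^ n) z) > 0 \<longrightarrow> has_arg_in ((G ^^ n) z) (-pi/4) (pi/4)) \<and>
              (Re ((G ^^ n) z) < 0 \<longrightarrow> has_arg_in ((G ^^ n) z) (3*pi/4) (5*pi/4))) \<and>
           cmod ((G ^^ (m - 1)) z) \<le> r))"
proof -
  define N where "N = nat \<lceil>3 / r\<rceil> + 2"
  have "2 \<le> N" by (simp add: N_def)
  have "3 / r \<le> real N" unfolding N_def by linarith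
  then have "3 / real N \<le> r" using assms(1) \<open>2 \<le> N\<close> by (simp add: field_simps)
  have "0 \<le> ln 2 / (2 * pi)" "6 * (ln 2 / (2 * pi)) \<le> 1"
    using ln_2_less_1 pi_gt3 by (simp_all add: field_simps)
  note bounds = QG_G_iterate_bounds[OF _ _ \<open>2 \<le> N\<close> this \<open>3 / real N \<le> r\<close> assms(2)]
  show ?thesis
    unfolding Let_def by (intro exI[of _ N] conjI allI impI \<open>2 \<le> N\<close> bounds)
qed

end
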